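(* Let $c\in\mathbb{R}$, $\beta\geq0$, $q\in(0,1)$, $Q=q^2$ and $y=e^{-2\beta}$. Then $$Z_{\beta,q,c} = y^{1/2} + \sum_{\substack{L,R\geq0\\ L+R>0}}y^{L+R} \sum_{\substack{\ell_1,\dots,\ell_L\geq 1 \\ m_1,\dots,m_{R}\geq 1}}\prod_{j=1}^{L} \frac{Q^{\frac12 \ell_j(\ell_j-1)+c\ell_j+j\ell_j+\ell_{j-1}(\ell_{j}+\cdots+\ell_{L})}}{1-Q^{\ell_{j}+\cdots + \ell_{L}}}\prod_{j=1}^{R}\frac{Q^{\frac12 m_j(m_j-1)-cm_j+jm_j+m_{j-1}(m_{j}+\cdots+m_{R})}}{1-Q^{m_{j}+\cdots+m_{R}}}\Big(y^{-1/2} + \big(y^{1/2}-y^{-1/2}\big)Q^{\ell_1+\cdots+\ell_L}Q^{m_1+\cdots+m_R}\Big),$$ with the conventions $\ell_0=-1$, $m_0=0$.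
   Context: Spin configurations are $\sigma\in\{-1,+1\}^{\mathbb{Z}}$; $\mathcal{B}$ is the set of configurations for which there exist $a,b\in\mathbb{Z}$ with $\sigma_{a-i}=-1$ and $\sigma_{b+i}=+1$ for all $i\in\mathbb{N}$. With $H(\sigma)=\sum_{i\in\mathbb{Z}}\mathbb{1}_{\{\sigma_i\neq\sigma_{i+1}\}}$ (interaction $J(i)\equiv1$) and $f_c(\sigma)=2\sum_{i=1}^\infty(i-c)\mathbb{1}_{\{\sigma_i=-1\}}-2\sum_{i=-\infty}^0(i-c)\mathbb{1}_{\{\sigma_i=1\}}$, the partition function is $Z_{\beta,q,c}=\sum_{\sigma\in\mathcal{B}}e^{-\beta H(\sigma)}q^{f_c(\sigma)}$. In the sum, $L,R\geq 0$ with $L+R>0$, the $\ell_j,m_j$ range over positive integers, and empty products equal $1$. *)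

theory Defs
  imports "HOL-Analysis.Analysis"
begin

definition spin_configs :: "(int \<Rightarrow> int) set" where
  "spin_configs = {\<sigma>. (\<forall>i. \<sigma> i = -1 \<or> \<sigma> i = 1) \<and>
     (\<exists>a b. \<forall>i::nat. \<sigma> (a - int i) = -1 \<and> \<sigma> (b + int i) = 1)}"

text \<open>Hamiltonian with J = 1: number of domain walls.\<close>
definition hamiltonian :: "(int \<Rightarrow> int) \<Rightarrow> real" where
  "hamiltonian \<sigma> = (\<Sum>\<^sub>\<infinity> i\<in>(UNIV::int set). if \<sigma> i \<noteq> \<sigma> (i+1) then 1 else 0)"

definition f_field :: "real \<Rightarrow> (int \<Rightarrow> int) \<Rightarrow> real" where
  "f_field c \<sigma> =
     2 * (\<Sum>\<^sub>\<infinity> i\<in>{i::int. i \<ge> 1}. (real_of_int i - c) * (if \<sigma> i = -1 then 1 else 0))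
   - 2 * (\<Sum>\<^sub>\<infinity> i\<in>{i::int. i \<le> 0}. (real_of_int i - c) * (if \<sigma> i = 1 then 1 else 0))"

definition Z_term :: "real \<Rightarrow> real \<Rightarrow> real \<Rightarrow> (int \<Rightarrow> int) \<Rightarrow> real" where
  "Z_term \<beta> q c \<sigma> = exp (- \<beta> * hamiltonian \<sigma>) * q powr (f_field c \<sigma>)"

definition block_prod :: "real \<Rightarrow> real \<Rightarrow> real \<Rightarrow> nat list \<Rightarrow> real" where
  "block_prod Q d x0 xs =
     (\<Prod>j\<in>{1..length xs}.
        let xj = real (xs ! (j - 1));
            prev = (if j = 1 then x0 else real (xs ! (j - 2)));
            S = sum_list (drop (j - 1) xs)
        in Q powr (xj * (xj - 1) / 2 + d * xj + real j * xj + prev * real S)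
           / (1 - Q ^ S))"

definition index_set :: "(nat list \<times> nat list) set" where
  "index_set = {(ls, ms). (\<forall>x\<in>set ls. 0 < x) \<and> (\<forall>x\<in>set ms. 0 < x) \<and>
                          length ls + length ms > 0}"

definition series_term :: "real \<Rightarrow> real \<Rightarrow> real \<Rightarrow> nat list \<times> nat list \<Rightarrow> real" where
  "series_term y Q c p = (case p of (ls, ms) \<Rightarrow>
     y ^ (length ls + length ms) * block_prod Q c (-1) ls * block_prod Q (-c) 0 ms *
     (y powr (-1/2) + (y powr (1/2) - y powr (-1/2)) * Q ^ sum_list ls * Q ^ sum_list ms))"

end

theory Submission
  imports Defs
begin

(* A configuration is determined by the finite sets B = {n >= 0. sigma(-n) = +1} and
   A = {n >= 1. sigma(n) = -1}, and each of these by its maximal runs: the run lengths l_j, m_j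
   and the gaps between the runs. The energy only sees the number L + R of runs and whether a run
   touches the origin (this decides the wall between sites 0 and 1), while q^(f_c) factorises over
   the sites of A and B. For fixed run lengths the sum over the gaps is therefore an iterated
   geometric series, which produces the denominators 1 - Q^(l_j + ... + l_L); the empty
   configuration contributes y^(1/2). All terms are nonnegative and bounded by
   prod_(b in B) Q^(b + c) * prod_(a in A) Q^(a - c), which is summable over pairs of finite sets,
   so the rearrangement is justified. *)

section \<open>Nonnegative sums\<close>

lemma has_sum_Sigma_nonneg:
  fixes f :: "'a \<times> 'b \<Rightarrow> real"
  assumes "\<And>x. x \<in> A \<Longrightarrow> ((\<lambda>y. f (x, y)) has_sum g x) (B x)"
    and "(g has_sum s) A"
    and "\<And>x y. x \<in> A \<Longrightarrow> y \<in> B x \<Longrightarrow> 0 \<le> f (x, y)"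
  shows "(f has_sum s) (Sigma A B)"
  using assms by (intro has_sum_SigmaI summable_on_SigmaI[where g = g]) (auto dest: has_sum_imp_summable)

lemma has_sum_mult_nonneg:
  fixes f :: "'a \<Rightarrow> real" and g :: "'b \<Rightarrow> real"
  assumes "(f has_sum a) A" "(g has_sum b) B" "\<And>x. x \<in> A \<Longrightarrow> 0 \<le> f x" "\<And>y. y \<in> B \<Longrightarrow> 0 \<le> g y"
  shows "((\<lambda>(x, y). f x * g y) has_sum a * b) (A \<times> B)"
  using assms
  by (intro has_sum_Sigma_nonneg[where g = "\<lambda>x. f x * b"]) (auto intro: has_sum_cmult_right has_sum_cmult_left)

lemma has_sum_geometric_from:
  fixes r :: real
  assumes "0 \<le> r" "r < 1"
  shows "((\<lambda>n. r ^ n) has_sum (r ^ k / (1 - r))) {k..}"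
proof -
  have "(\<lambda>n. r ^ (n + k)) sums (r ^ k / (1 - r))"
    using sums_mult[OF geometric_sums, of r "r ^ k"] assms by (simp add: power_add field_simps)
  then have "((\<lambda>n. r ^ (n + k)) has_sum (r ^ k / (1 - r))) UNIV"
    using assms by (intro sums_nonneg_imp_has_sum) auto
  also have "?this \<longleftrightarrow> ?thesis"
    by (rule has_sum_reindex_bij_witness[of _ "\<lambda>n. n - k" "\<lambda>n. n + k"]) auto
  finally show ?thesis .
qed

lemma summable_on_finite_subsets_prod:
  fixes a :: "'a \<Rightarrow> real"
  assumes "a summable_on A" and "\<And>i. i \<in> A \<Longrightarrow> 0 \<le> a i"
  shows "(\<lambda>S. \<Prod>i\<in>S. a i) summable_on {S. finite S \<and> S \<subseteq> A}"
proof (rule nonneg_bdd_above_summable_on)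
  show "0 \<le> (\<Prod>i\<in>S. a i)" if "S \<in> {S. finite S \<and> S \<subseteq> A}" for S
    using that assms(2) by (auto intro: prod_nonneg)
  show "bdd_above (sum (\<lambda>S. \<Prod>i\<in>S. a i) ` {F. F \<subseteq> {S. finite S \<and> S \<subseteq> A} \<and> finite F})"
  proof (rule bdd_aboveI2)
    fix F assume "F \<in> {F. F \<subseteq> {S. finite S \<and> S \<subseteq> A} \<and> finite F}"
    then have F: "finite F" "F \<subseteq> Pow (\<Union>F)" "finite (\<Union>F)" "\<Union>F \<subseteq> A" by auto
    have "(\<Sum>S\<in>F. \<Prod>i\<in>S. a i) \<le> (\<Sum>S\<in>Pow (\<Union>F). \<Prod>i\<in>S. a i)"
      using F assms(2) by (intro sum_mono2) (auto intro!: prod_nonneg simp: subset_iff)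
    also have "\<dots> = (\<Prod>i\<in>\<Union>F. a i + 1)"
      using F by (subst prod_add) auto
    also have "\<dots> \<le> (\<Prod>i\<in>\<Union>F. exp (a i))"
      using F assms(2) by (intro prod_mono) (auto simp: add.commute)
    also have "\<dots> = exp (\<Sum>i\<in>\<Union>F. a i)"
      using F by (simp add: exp_sum)
    also have "\<dots> \<le> exp (\<Sum>\<^sub>\<infinity>i\<in>A. a i)"
      using F assms by (intro exp_mono finite_sum_le_infsum) auto
    finally show "(\<Sum>S\<in>F. \<Prod>i\<in>S. a i) \<le> exp (\<Sum>\<^sub>\<infinity>i\<in>A. a i)" .
  qed
qed

section \<open>Finite sets of naturals as runs and gaps\<close>

(* Run j has length ls!j and is preceded by gs!j free sites, plus one more for j > 0, counted from s:
   runs never touch, so every finite subset of {s..} arises exactly once. *)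
fun runs :: "nat \<Rightarrow> nat list \<Rightarrow> nat list \<Rightarrow> nat set" where
  "runs s (l # ls) (g # gs) = {s + g..<s + g + l} \<union> runs (s + g + l + 1) ls gs"
| "runs s _ _ = {}"

definition run_codes :: "(nat list \<times> nat list) set" where
  "run_codes = {(ls, gs). (\<forall>l\<in>set ls. 0 < l) \<and> length gs = length ls}"

lemma runs_subset: "runs s ls gs \<subseteq> {s..}"
  by (induction s ls gs rule: runs.induct) auto

lemma finite_runs [simp]: "finite (runs s ls gs)"
  by (induction s ls gs rule: runs.induct) auto

lemma runs_Cons_disjoint: "{s + g..<s + g + l} \<inter> runs (s + g + l + 1) ls gs = {}"
  using runs_subset[of "s + g + l + 1" ls gs] by auto

lemma start_mem_runs_iff:
  assumes "(ls, gs) \<in> run_codes"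
  shows "s \<in> runs s ls gs \<longleftrightarrow> gs \<noteq> [] \<and> hd gs = 0"
  using assms runs_subset[of "s + hd gs + hd ls + 1" "tl ls" "tl gs"]
  by (cases ls; cases gs) (auto simp: run_codes_def)

lemma runs_Cons_head:
  assumes "0 < l"
  shows "Min (runs s (l # ls) (g # gs)) = s + g"
    and "(LEAST k. s + g + k \<notin> runs s (l # ls) (g # gs)) = l"
  using assms runs_subset[of "s + g + l + 1" ls gs]
  by (auto intro!: Min_eqI Least_equality)

lemma runs_Cons_tail: "runs (s + g + l + 1) ls gs = runs s (l # ls) (g # gs) - {s + g..<s + g + l}"
  using runs_Cons_disjoint[of s g l ls gs] by auto

lemma runs_inj:
  assumes "(ls, gs) \<in> run_codes" "(ls', gs') \<in> run_codes" "runs s ls gs = runs s ls' gs'"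
  shows "ls = ls' \<and> gs = gs'"
  using assms
proof (induction ls arbitrary: s gs ls' gs')
  case Nil
  then show ?case
    by (cases ls'; cases gs') (auto simp: run_codes_def)
next
  case (Cons l ls)
  obtain g gs0 where gs: "gs = g # gs0"
    using Cons.prems(1) by (cases gs) (auto simp: run_codes_def)
  show ?case
  proof (cases ls')
    case Nil
    then show ?thesis
      using Cons.prems gs by (cases gs') (auto simp: run_codes_def)
  next
    case (Cons l' ls0')
    then obtain g' gs0' where gs': "gs' = g' # gs0'"
      using Cons.prems(2) by (cases gs') (auto simp: run_codes_def)
    have pos: "0 < l" "0 < l'"
      using Cons.prems Cons by (auto simp: run_codes_def)
    have S: "runs s (l # ls) (g # gs0) = runs s (l' # ls0') (g' # gs0')"
      using Cons.prems(3) gs gs' Cons by simp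
    have "g = g'"
      using runs_Cons_head(1)[OF pos(1), where s = s and ls = ls and g = g and gs = gs0]
        runs_Cons_head(1)[OF pos(2), where s = s and ls = ls0' and g = g' and gs = gs0'] S by simp
    moreover have "l = l'"
      using runs_Cons_head(2)[OF pos(1), where s = s and ls = ls and g = g and gs = gs0]
        runs_Cons_head(2)[OF pos(2), where s = s and ls = ls0' and g = g' and gs = gs0'] S \<open>g = g'\<close>
      by metis
    ultimately have "runs (s + g + l + 1) ls gs0 = runs (s + g + l + 1) ls0' gs0'"
      using S by (simp only: runs_Cons_tail)
    with Cons.IH[of gs0 ls0' gs0'] Cons.prems \<open>g = g'\<close> \<open>l = l'\<close> gs gs' Cons show ?thesis
      by (auto simp: run_codes_def)
  qed
qed

lemma runs_surj:
  assumes "finite S" "S \<subseteq> {s..}"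
  shows "\<exists>ls gs. (ls, gs) \<in> run_codes \<and> S = runs s ls gs"
  using assms
proof (induction "card S" arbitrary: S s rule: less_induct)
  case less
  show ?case
  proof (cases "S = {}")
    case True
    then show ?thesis
      by (intro exI[of _ "[]"]) (auto simp: run_codes_def)
  next
    case False
    define a where "a = Min S"
    have a: "a \<in> S" "\<And>x. x \<in> S \<Longrightarrow> a \<le> x"
      using False less.prems(1) by (auto simp: a_def)
    have "a + (Max S + 1 - a) \<notin> S"
      using less.prems(1) a(1) by (auto dest: Max_ge)
    then have ex: "\<exists>k. a + k \<notin> S" ..
    define l where "l = (LEAST k. a + k \<notin> S)"
    have l: "a + l \<notin> S" "\<And>k. k < l \<Longrightarrow> a + k \<in> S"
      using LeastI_ex[OF ex] not_less_Least by (auto simp: l_def)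
    have "0 < l"
      using l(1) a(1) by (cases l) auto
    have run: "{a..<a + l} \<subseteq> S"
      using l(2) by (auto simp: le_iff_add)
    define T where "T = S - {a..<a + l}"
    have T: "T \<subseteq> {a + l + 1..}"
    proof
      fix x assume "x \<in> T"
      then have "a \<le> x" "x \<noteq> a + l" "\<not> x < a + l"
        using a(2) l(1) by (auto simp: T_def)
      then show "x \<in> {a + l + 1..}" by simp
    qed
    have "a \<in> {a..<a + l}"
      using \<open>0 < l\<close> by simp
    then have "card T < card S"
      using less.prems(1) a(1) unfolding T_def by (intro psubset_card_mono) blast+
    moreover have "finite T"
      using less.prems(1) by (simp add: T_def)
    ultimately obtain ls gs where codes: "(ls, gs) \<in> run_codes" and "T = runs (a + l + 1) ls gs"
      using less.hyps T by blast
    moreover have "S = {a..<a + l} \<union> T" and "s \<le> a"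
      using run a(1) less.prems(2) by (auto simp: T_def)
    ultimately have "S = runs s (l # ls) ((a - s) # gs)"
      by simp
    with codes show ?thesis
      using \<open>0 < l\<close> by (intro exI[of _ "l # ls"] exI[of _ "(a - s) # gs"]) (auto simp: run_codes_def)
  qed
qed

lemma bij_betw_runs: "bij_betw (\<lambda>(ls, gs). runs s ls gs) run_codes {S. finite S \<and> S \<subseteq> {s..}}"
  unfolding bij_betw_def
proof
  show "inj_on (\<lambda>(ls, gs). runs s ls gs) run_codes"
    using runs_inj by (auto intro!: inj_onI)
  show "(\<lambda>(ls, gs). runs s ls gs) ` run_codes = {S. finite S \<and> S \<subseteq> {s..}}"
  proof (intro subset_antisym subsetI)
    fix S assume "S \<in> {S. finite S \<and> S \<subseteq> {s..}}"
    then obtain ls gs where "(ls, gs) \<in> run_codes" "S = runs s ls gs"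
      using runs_surj by blast
    then show "S \<in> (\<lambda>(ls, gs). runs s ls gs) ` run_codes"
      by force
  qed (use runs_subset in auto)
qed

definition boundary :: "nat set \<Rightarrow> nat set" where
  "boundary S = {j. (j \<in> S) \<noteq> (Suc j \<in> S)}"

lemma finite_boundary: "finite S \<Longrightarrow> finite (boundary S)"
  by (rule finite_subset[of _ "S \<union> (\<lambda>j. j - 1) ` S"]) (force simp: boundary_def image_iff)+

lemma boundary_run_Un:
  assumes "0 < l" "T \<subseteq> {a + l + 1..}"
  shows "boundary ({a..<a + l} \<union> T) = insert (a + l - 1) ((if a = 0 then {} else {a - 1}) \<union> boundary T)"
  using assms unfolding boundary_def by (auto; force)

lemma card_boundary_runs:
  assumes "(ls, gs) \<in> run_codes"
  shows "card (boundary (runs s ls gs)) + of_bool (0 \<in> runs s ls gs) = 2 * length ls"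
  using assms
proof (induction s ls gs rule: runs.induct)
  case (1 s l ls g gs)
  define a where "a = s + g"
  define T where "T = runs (a + l + 1) ls gs"
  have "0 < l" and codes: "(ls, gs) \<in> run_codes"
    using "1.prems" by (auto simp: run_codes_def)
  have S: "runs s (l # ls) (g # gs) = {a..<a + l} \<union> T"
    by (simp add: a_def T_def)
  have T: "T \<subseteq> {a + l + 1..}"
    unfolding T_def by (rule runs_subset)
  then have "boundary T \<subseteq> {a + l..}"
    by (auto simp: boundary_def)
  then have "card (boundary ({a..<a + l} \<union> T)) = 1 + of_bool (a \<noteq> 0) + card (boundary T)"
    using \<open>0 < l\<close> finite_boundary[of T] unfolding boundary_run_Un[OF \<open>0 < l\<close> T]
    by (auto simp: card_insert_if T_def)
  moreover have "0 \<in> {a..<a + l} \<union> T \<longleftrightarrow> a = 0"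
    using T \<open>0 < l\<close> by auto
  moreover have "card (boundary T) = 2 * length ls"
    using "1.IH"[OF codes] T unfolding T_def a_def by force
  ultimately show ?case
    unfolding S by auto
qed (auto simp: run_codes_def boundary_def)

section \<open>Summing over the gaps\<close>

definition block_factor :: "real \<Rightarrow> real \<Rightarrow> real \<Rightarrow> nat list \<Rightarrow> nat \<Rightarrow> real" where
  "block_factor Q d p xs j =
     (let xj = real (xs ! (j - 1));
          prev = (if j = 1 then p else real (xs ! (j - 2)));
          S = sum_list (drop (j - 1) xs)
      in Q powr (xj * (xj - 1) / 2 + d * xj + real j * xj + prev * real S) / (1 - Q ^ S))"

lemma block_prod_eq_prod_block_factor:
  "block_prod Q d p xs = (\<Prod>j\<in>{1..length xs}. block_factor Q d p xs j)"
  unfolding block_prod_def block_factor_def by simp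

lemma block_prod_Nil [simp]: "block_prod Q d p [] = 1"
  by (simp add: block_prod_def)

lemma sum_nth_pred: "(\<Sum>j\<in>{1..length xs}. real (xs ! (j - 1))) = real (sum_list xs)"
proof -
  have "(\<Sum>j\<in>{1..length xs}. real (xs ! (j - 1))) = (\<Sum>j<length xs. real (xs ! j))"
    by (rule sum.reindex_bij_witness[where i = "\<lambda>j. j + 1" and j = "\<lambda>j. j - 1"]) auto
  then show ?thesis
    by (simp add: sum_list_sum_nth atLeast0LessThan)
qed

lemma block_prod_Cons:
  assumes "0 < Q"
  shows "block_prod Q d p (x # xs) =
    Q powr (real x * (real x - 1) / 2 + d * real x + real x + p * real (x + sum_list xs))
      / (1 - Q ^ (x + sum_list xs)) * Q powr real (sum_list xs) * block_prod Q d (real x) xs"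
proof -
  let ?f = "block_factor Q d p (x # xs)" and ?n = "length xs"
  have "block_prod Q d p (x # xs) = ?f 1 * (\<Prod>j\<in>{1..?n}. ?f (Suc j))"
    unfolding block_prod_eq_prod_block_factor
    by (simp add: prod.atLeast_Suc_atMost prod.shift_bounds_cl_Suc_ivl del: prod.cl_ivl_Suc)
  \<comment> \<open>beyond the first factor, the index \<open>j\<close> grows by one, which multiplies in \<open>Q ^ x\<^sub>j\<close>\<close>
  also have "(\<Prod>j\<in>{1..?n}. ?f (Suc j))
      = (\<Prod>j\<in>{1..?n}. Q powr real (xs ! (j - 1)) * block_factor Q d (real x) xs j)"
  proof (rule prod.cong[OF refl])
    fix j assume "j \<in> {1..?n}"
    then obtain i where j: "j = Suc i" by (cases j) auto
    show "?f (Suc j) = Q powr real (xs ! (j - 1)) * block_factor Q d (real x) xs j"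
      unfolding block_factor_def Let_def j
      by (cases i) (simp_all add: powr_add[symmetric] algebra_simps)
  qed
  also have "\<dots> = Q powr real (sum_list xs) * block_prod Q d (real x) xs"
    using assms sum_nth_pred[of xs]
    by (simp add: prod.distrib powr_sum[symmetric] block_prod_eq_prod_block_factor)
  finally show ?thesis
    by (simp add: block_factor_def Let_def)
qed

lemma block_prod_shift_prev:
  assumes "0 < Q"
  shows "block_prod Q d (p + t) xs = Q powr (t * real (sum_list xs)) * block_prod Q d p xs"
  using assms
  by (cases xs) (simp_all add: block_prod_Cons powr_add[symmetric] algebra_simps)

lemma sum_atLeastLessThan_add_const:
  "(\<Sum>i\<in>{a..<a + l}. real i + d) = real l * real a + real l * (real l - 1) / 2 + d * real l"
  by (induction l) (simp_all add: field_simps)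

lemma sum_runs_Cons:
  "(\<Sum>i\<in>runs s (l # ls) (g # gs). real i + d) =
     real l * real (s + g) + real l * (real l - 1) / 2 + d * real l + (\<Sum>i\<in>runs (s + g + l + 1) ls gs. real i + d)"
proof -
  have "(\<Sum>i\<in>runs s (l # ls) (g # gs). real i + d) =
      (\<Sum>i\<in>{s + g..<s + g + l}. real i + d) + (\<Sum>i\<in>runs (s + g + l + 1) ls gs. real i + d)"
    unfolding runs.simps by (rule sum.union_disjoint) (use runs_Cons_disjoint in auto)
  then show ?thesis
    by (simp add: sum_atLeastLessThan_add_const)
qed

definition gaps_from :: "nat \<Rightarrow> nat list \<Rightarrow> nat list set" where
  "gaps_from k xs = {gs. length gs = length xs \<and> (gs = [] \<or> k \<le> hd gs)}"

lemma bij_betw_Cons_gaps_from: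
  "bij_betw (\<lambda>(g, gs). g # gs) ({k..} \<times> gaps_from 0 xs) (gaps_from k (x # xs))"
  by (rule bij_betw_byWitness[where f' = "\<lambda>gs. (hd gs, tl gs)"]) (auto simp: gaps_from_def length_Suc_conv)

lemma has_sum_runs_weight_Cons_fixed_gap:
  assumes "0 < Q"
    and "((\<lambda>gs. Q powr (\<Sum>i\<in>runs (s + g + l + 1) ls gs. real i + d)) has_sum block_prod Q d (real (s + g + l)) ls)
           (gaps_from 0 ls)"
  shows "((\<lambda>gs. Q powr (\<Sum>i\<in>runs s (l # ls) (g # gs). real i + d)) has_sum
           Q powr (real s * real (l + sum_list ls) + real l * (real l - 1) / 2 + d * real l)
             * block_prod Q d (real l) ls * (Q ^ (l + sum_list ls)) ^ g) (gaps_from 0 ls)"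
proof -
  define E where "E = real l * real (s + g) + real l * (real l - 1) / 2 + d * real l"
  have "((\<lambda>gs. Q powr E * Q powr (\<Sum>i\<in>runs (s + g + l + 1) ls gs. real i + d)) has_sum
      Q powr E * block_prod Q d (real l + real (s + g)) ls) (gaps_from 0 ls)"
    using has_sum_cmult_right[OF assms(2)] by (simp add: add_ac)
  moreover have "block_prod Q d (real l + real (s + g)) ls
      = Q powr (real (s + g) * real (sum_list ls)) * block_prod Q d (real l) ls"
    by (rule block_prod_shift_prev[OF assms(1)])
  moreover have "(Q ^ (l + sum_list ls)) ^ g = Q powr (real (l + sum_list ls) * real g)"
    using assms(1) powr_realpow[of Q "(l + sum_list ls) * g"] by (simp add: power_mult)
  ultimately show ?thesis
    unfolding sum_runs_Cons by (simp add: E_def powr_add[symmetric] algebra_simps)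
qed

(* Starting the runs at s = 0 (resp. s = 1) with k = 0 gives the conventions l_0 = -1 (resp. m_0 = 0). *)
lemma has_sum_runs_weight:
  assumes "0 < Q" "Q < 1" "\<forall>l\<in>set ls. 0 < l"
  shows "((\<lambda>gs. Q powr (\<Sum>i\<in>runs s ls gs. real i + d)) has_sum block_prod Q d (real s + real k - 1) ls)
           (gaps_from k ls)"
  using assms(3)
proof (induction ls arbitrary: s k)
  case Nil
  have "gaps_from k [] = {[]}"
    by (auto simp: gaps_from_def)
  then show ?case
    using assms(1) by (simp add: has_sum_finiteI)
next
  case (Cons l ls)
  define r where "r = Q ^ (l + sum_list ls)"
  define C where "C = Q powr (real s * real (l + sum_list ls) + real l * (real l - 1) / 2 + d * real l)
                       * block_prod Q d (real l) ls"
  have "0 < l" and pos: "\<forall>l\<in>set ls. 0 < l"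
    using Cons.prems by auto
  have r: "0 \<le> r" "r < 1"
    using assms(1,2) \<open>0 < l\<close> by (auto simp: r_def power_less_one_iff)
  have "((\<lambda>gs. Q powr (\<Sum>i\<in>runs s (l # ls) (g # gs). real i + d)) has_sum C * r ^ g) (gaps_from 0 ls)" for g
  proof -
    have "((\<lambda>gs. Q powr (\<Sum>i\<in>runs (s + g + l + 1) ls gs. real i + d)) has_sum block_prod Q d (real (s + g + l)) ls)
        (gaps_from 0 ls)"
      using Cons.IH[OF pos, of "s + g + l + 1" 0] by simp
    from has_sum_runs_weight_Cons_fixed_gap[OF assms(1) this, folded C_def r_def] show ?thesis .
  qed
  then have "((\<lambda>p. Q powr (\<Sum>i\<in>runs s (l # ls) (case p of (g, gs) \<Rightarrow> g # gs). real i + d))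
      has_sum C * (r ^ k / (1 - r))) ({k..} \<times> gaps_from 0 ls)"
    using has_sum_cmult_right[OF has_sum_geometric_from[OF r], of C k]
    by (intro has_sum_Sigma_nonneg[where g = "\<lambda>g. C * r ^ g"]) auto
  then have "((\<lambda>gs. Q powr (\<Sum>i\<in>runs s (l # ls) gs. real i + d)) has_sum C * (r ^ k / (1 - r)))
      (gaps_from k (l # ls))"
    by (rule has_sum_reindex_bij_betw[OF bij_betw_Cons_gaps_from, THEN iffD1])
  moreover have "C * (r ^ k / (1 - r)) = block_prod Q d (real s + real k - 1) (l # ls)"
    using assms(1)
    by (simp add: block_prod_Cons C_def r_def powr_realpow[symmetric] powr_powr powr_add[symmetric] algebra_simps)
  ultimately show ?case
    by simp
qed

section \<open>Configurations as pairs of finite sets\<close>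

(* B and A record the spins differing from the ground state (-1 on sites <= 0, +1 on sites >= 1). *)
definition config :: "nat set \<Rightarrow> nat set \<Rightarrow> int \<Rightarrow> int" where
  "config B A i = (if 1 \<le> i then (if nat i \<in> A then -1 else 1) else (if nat (- i) \<in> B then 1 else -1))"

lemma config_mem_spin_configs:
  assumes "finite B" "finite A"
  shows "config B A \<in> spin_configs"
proof -
  obtain N where N: "B \<subseteq> {..<N}" "A \<subseteq> {..<N}"
    using finite_nat_bounded[of "A \<union> B"] assms by auto
  have "config B A (- int N - int i) = -1 \<and> config B A (int N + 1 + int i) = 1" for i :: nat
  proof -
    have "nat (- (- int N - int i)) = N + i" "nat (int N + 1 + int i) = N + 1 + i"
      by simp_all
    then show ?thesis
      using N by (auto simp: config_def)
  qed
  moreover have "config B A i = -1 \<or> config B A i = 1" for i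
    by (simp add: config_def)
  ultimately show ?thesis
    unfolding spin_configs_def by blast
qed

lemma finite_spin_flips:
  assumes "\<sigma> \<in> spin_configs"
  shows "finite {n. \<sigma> (- int n) = 1}" and "finite {n. 0 < n \<and> \<sigma> (int n) = -1}"
proof -
  obtain a b where ab: "\<And>i::nat. \<sigma> (a - int i) = -1" "\<And>i::nat. \<sigma> (b + int i) = 1"
    using assms unfolding spin_configs_def by blast
  have "\<sigma> (- int n) = -1" if "nat (- a) \<le> n" for n
    using ab(1)[of "nat (a + int n)"] that by (simp split: if_split_asm)
  then have "{n. \<sigma> (- int n) = 1} \<subseteq> {..<nat (- a)}"
    by (metis (mono_tags) lessThan_iff mem_Collect_eq not_le subsetI minus_equation_iff one_neq_neg_one)
  then show "finite {n. \<sigma> (- int n) = 1}"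
    by (rule finite_subset) simp
  have "\<sigma> (int n) = 1" if "nat b \<le> n" for n
    using ab(2)[of "nat (int n - b)"] that by (simp split: if_split_asm)
  then have "{n. 0 < n \<and> \<sigma> (int n) = -1} \<subseteq> {..<nat b}"
    by (metis (mono_tags) lessThan_iff mem_Collect_eq not_le subsetI one_neq_neg_one)
  then show "finite {n. 0 < n \<and> \<sigma> (int n) = -1}"
    by (rule finite_subset) simp
qed

lemma config_flips_inverse:
  assumes "0 \<notin> A"
  shows "{n. config B A (- int n) = 1} = B" and "{n. 0 < n \<and> config B A (int n) = -1} = A"
proof -
  have "config B A (- int n) = (if n \<in> B then 1 else -1)" for n
    by (simp add: config_def)
  then show "{n. config B A (- int n) = 1} = B"
    by simp
  have "0 < n \<and> config B A (int n) = -1 \<longleftrightarrow> n \<in> A" for n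
    using assms by (cases "n = 0") (auto simp: config_def)
  then show "{n. 0 < n \<and> config B A (int n) = -1} = A"
    by simp
qed

lemma config_flips_eq:
  assumes "\<sigma> \<in> spin_configs"
  shows "config {n. \<sigma> (- int n) = 1} {n. 0 < n \<and> \<sigma> (int n) = -1} = \<sigma>"
proof
  fix i
  have pm: "\<sigma> i = -1 \<or> \<sigma> i = 1"
    using assms by (simp add: spin_configs_def)
  show "config {n. \<sigma> (- int n) = 1} {n. 0 < n \<and> \<sigma> (int n) = -1} i = \<sigma> i"
  proof (cases "1 \<le> i")
    case True
    define n where "n = nat i"
    have i: "i = int n" "0 < n"
      using True by (simp_all add: n_def)
    show ?thesis
      using pm unfolding i(1) using i(2) by (auto simp: config_def)
  next
    case False
    define n where "n = nat (- i)"
    have i: "i = - int n"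
      using False by (simp add: n_def)
    show ?thesis
      using pm False unfolding i by (auto simp: config_def)
  qed
qed

lemma bij_betw_config:
  "bij_betw (\<lambda>(B, A). config B A) ({B. finite B} \<times> {A. finite A \<and> 0 \<notin> A}) spin_configs"
  by (rule bij_betw_byWitness[where f' = "\<lambda>\<sigma>. ({n. \<sigma> (- int n) = 1}, {n. 0 < n \<and> \<sigma> (int n) = -1})"])
    (auto simp: config_flips_inverse config_flips_eq config_mem_spin_configs finite_spin_flips)

lemma config_wall_iff:
  shows "config B A (- int j - 1) \<noteq> config B A (- int j - 1 + 1) \<longleftrightarrow> j \<in> boundary B"
    and "0 < n \<Longrightarrow> config B A (int n) \<noteq> config B A (int n + 1) \<longleftrightarrow> n \<in> boundary A"
    and "config B A 0 \<noteq> config B A (0 + 1) \<longleftrightarrow> (0 \<in> B) = (1 \<in> A)"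
proof -
  have "nat (1 + int j) = Suc j" "nat (int n + 1) = Suc n"
    by simp_all
  then show "config B A (- int j - 1) \<noteq> config B A (- int j - 1 + 1) \<longleftrightarrow> j \<in> boundary B"
    and "0 < n \<Longrightarrow> config B A (int n) \<noteq> config B A (int n + 1) \<longleftrightarrow> n \<in> boundary A"
    by (auto simp: config_def boundary_def)
  show "config B A 0 \<noteq> config B A (0 + 1) \<longleftrightarrow> (0 \<in> B) = (1 \<in> A)"
    by (simp add: config_def)
qed

lemma config_walls:
  "{i. config B A i \<noteq> config B A (i + 1)} =
     (\<lambda>j. - int j - 1) ` boundary B \<union> int ` (boundary A - {0}) \<union> (if (0 \<in> B) = (1 \<in> A) then {0} else {})"
proof (rule set_eqI)
  fix i :: int
  consider j where "i = - int j - 1" | "i = 0" | n where "i = int n" "0 < n"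
  proof (cases "i < 0")
    case True
    then show thesis
      using that(1)[of "nat (- i - 1)"] by simp
  next
    case False
    then show thesis
      using that(2) that(3)[of "nat i"] by (cases "i = 0") simp_all
  qed
  then show "i \<in> {i. config B A i \<noteq> config B A (i + 1)} \<longleftrightarrow>
      i \<in> (\<lambda>j. - int j - 1) ` boundary B \<union> int ` (boundary A - {0}) \<union> (if (0 \<in> B) = (1 \<in> A) then {0} else {})"
  proof cases
    case 1
    then show ?thesis
      using config_wall_iff(1)[of B A j] by auto
  next
    case 2
    then show ?thesis
      using config_wall_iff(3)[of B A] by auto
  next
    case 3
    then show ?thesis
      using config_wall_iff(2)[of n B A] by auto
  qed
qed

lemma hamiltonian_config:
  assumes "finite B" "finite A"
  shows "hamiltonian (config B A)
    = real (card (boundary B) + card (boundary A - {0}) + of_bool ((0 \<in> B) = (1 \<in> A)))"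
proof -
  define W1 where "W1 = (\<lambda>j. - int j - 1) ` boundary B"
  define W2 where "W2 = int ` (boundary A - {0})"
  define W3 where "W3 = (if (0 \<in> B) = (1 \<in> A) then {0::int} else {})"
  have finite: "finite W1" "finite W2" "finite W3"
    using assms finite_boundary by (auto simp: W1_def W2_def W3_def)
  have "card (W1 \<union> W2 \<union> W3) = card W1 + card W2 + card W3"
    using finite by (subst card_Un_disjoint; auto simp: W1_def W2_def W3_def card_Un_disjoint)+
  also have "\<dots> = card (boundary B) + card (boundary A - {0}) + of_bool ((0 \<in> B) = (1 \<in> A))"
    by (simp add: W1_def W2_def W3_def card_image inj_on_def)
  finally have card: "card (W1 \<union> W2 \<union> W3) = \<dots>" .
  have "{i. config B A i \<noteq> config B A (i + 1)} = W1 \<union> W2 \<union> W3"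
    unfolding W1_def W2_def W3_def by (rule config_walls)
  then have "hamiltonian (config B A) = (\<Sum>\<^sub>\<infinity>i\<in>W1 \<union> W2 \<union> W3. 1)"
    unfolding hamiltonian_def by (intro infsum_cong_neutral) auto
  then show ?thesis
    using finite card by simp
qed

lemma f_field_config:
  assumes "finite B" "finite A" "0 \<notin> A"
  shows "f_field c (config B A) = 2 * (\<Sum>b\<in>B. real b + c) + 2 * (\<Sum>a\<in>A. real a - c)"
proof -
  have "(\<Sum>\<^sub>\<infinity>i\<in>{i::int. i \<ge> 1}. (real_of_int i - c) * (if config B A i = -1 then 1 else 0))
      = (\<Sum>\<^sub>\<infinity>i\<in>int ` A. real_of_int i - c)"
  proof (rule infsum_cong_neutral)
    fix i assume "i \<in> {i::int. i \<ge> 1} - int ` A"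
    then have "1 \<le> i" "nat i \<notin> A"
      by (auto simp: image_iff)
    then show "(real_of_int i - c) * (if config B A i = -1 then 1 else 0) = 0"
      by (simp add: config_def)
  qed (use assms(3) in \<open>auto simp: config_def not_less_eq_eq\<close>)
  also have "\<dots> = (\<Sum>a\<in>A. real a - c)"
    using assms(2) by (simp add: sum.reindex)
  finally have right: "(\<Sum>\<^sub>\<infinity>i\<in>{i::int. i \<ge> 1}. (real_of_int i - c) * (if config B A i = -1 then 1 else 0))
      = (\<Sum>a\<in>A. real a - c)" .
  have "(\<Sum>\<^sub>\<infinity>i\<in>{i::int. i \<le> 0}. (real_of_int i - c) * (if config B A i = 1 then 1 else 0))
      = (\<Sum>\<^sub>\<infinity>i\<in>(\<lambda>b. - int b) ` B. real_of_int i - c)"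
  proof (rule infsum_cong_neutral)
    fix i assume "i \<in> {i::int. i \<le> 0} - (\<lambda>b. - int b) ` B"
    then have "i \<le> 0" "nat (- i) \<notin> B"
      by (auto simp: image_iff)
    then show "(real_of_int i - c) * (if config B A i = 1 then 1 else 0) = 0"
      by (simp add: config_def)
  qed (auto simp: config_def)
  also have "\<dots> = (\<Sum>b\<in>B. - (real b + c))"
    using assms(1) by (simp add: sum.reindex inj_on_def)
  also have "\<dots> = - (\<Sum>b\<in>B. real b + c)"
    by (rule sum_negf)
  finally have left: "(\<Sum>\<^sub>\<infinity>i\<in>{i::int. i \<le> 0}. (real_of_int i - c) * (if config B A i = 1 then 1 else 0))
      = - (\<Sum>b\<in>B. real b + c)" .
  show ?thesis
    unfolding f_field_def left right by simp
qed

lemma Z_term_config: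
  assumes "0 < q" "Q = q ^ 2" "finite B" "finite A" "0 \<notin> A"
  shows "Z_term \<beta> q c (config B A) = exp (- \<beta> * hamiltonian (config B A))
           * (\<Prod>b\<in>B. Q powr (real b + c)) * (\<Prod>a\<in>A. Q powr (real a - c))"
proof -
  have "q powr f_field c (config B A) = Q powr (\<Sum>b\<in>B. real b + c) * Q powr (\<Sum>a\<in>A. real a - c)"
    using assms by (simp add: f_field_config powr_powr[symmetric] powr_add)
  then show ?thesis
    using assms(1,2) by (simp add: Z_term_def powr_sum)
qed

lemma hamiltonian_nonneg: "0 \<le> hamiltonian \<sigma>"
  unfolding hamiltonian_def by (rule infsum_nonneg) simp

lemma summable_on_finite_subsets_prod_powr:
  assumes "0 < Q" "Q < 1"
  shows "(\<lambda>S. \<Prod>i\<in>S. Q powr (real i + t)) summable_on {S. finite S}"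
proof -
  have "summable (\<lambda>i. Q powr t * Q ^ i)"
    using assms by (intro summable_mult summable_geometric) auto
  then have "(\<lambda>i. Q powr (real i + t)) summable_on UNIV"
    using assms(1) by (intro summable_nonneg_imp_summable_on) (simp_all add: powr_add powr_realpow mult.commute)
  then show ?thesis
    using summable_on_finite_subsets_prod[of "\<lambda>i. Q powr (real i + t)" UNIV] by simp
qed

lemma summable_Z_term:
  assumes "0 \<le> \<beta>" "0 < q" "q < 1"
  shows "Z_term \<beta> q c summable_on spin_configs"
proof -
  define Q where "Q = q ^ 2"
  have Q: "0 < Q" "Q < 1"
    using assms(2,3) by (simp_all add: Q_def power_less_one_iff)
  define L where "L B = (\<Prod>b\<in>B. Q powr (real b + c))" for B :: "nat set"
  define R where "R A = (\<Prod>a\<in>A. Q powr (real a - c))" for A :: "nat set"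
  let ?D = "{B :: nat set. finite B} \<times> {A :: nat set. finite A \<and> 0 \<notin> A}"
  have sL: "L summable_on {B. finite B}"
    unfolding L_def by (rule summable_on_finite_subsets_prod_powr[OF Q])
  have "R summable_on {A. finite A}"
    unfolding R_def using summable_on_finite_subsets_prod_powr[OF Q, of "- c"] by simp
  then have sR: "R summable_on {A. finite A \<and> 0 \<notin> A}"
    by (rule summable_on_subset) auto
  have "((\<lambda>(B, A). L B * R A) has_sum infsum L {B. finite B} * infsum R {A. finite A \<and> 0 \<notin> A}) ?D"
    by (rule has_sum_mult_nonneg[OF has_sum_infsum[OF sL] has_sum_infsum[OF sR]])
      (auto simp: L_def R_def intro!: prod_nonneg)
  then have "(\<lambda>p. Z_term \<beta> q c (case p of (B, A) \<Rightarrow> config B A)) summable_on ?D"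
  proof (rule summable_on_comparison_test[OF has_sum_imp_summable])
    fix p assume "p \<in> ?D"
    then obtain B A where p: "p = (B, A)" "finite B" "finite A" "0 \<notin> A"
      by auto
    have "exp (- \<beta> * hamiltonian (config B A)) \<le> 1"
      using assms(1) hamiltonian_nonneg by simp
    then show "Z_term \<beta> q c (case p of (B, A) \<Rightarrow> config B A) \<le> (\<lambda>(B, A). L B * R A) p"
      and "0 \<le> Z_term \<beta> q c (case p of (B, A) \<Rightarrow> config B A)"
      using Z_term_config[OF assms(2) Q_def p(2-4)] p(1)
      by (auto simp: L_def R_def mult.assoc intro!: mult_left_le_one_le mult_nonneg_nonneg prod_nonneg)
  qed
  then show ?thesis
    by (rule summable_on_reindex_bij_betw[OF bij_betw_config, THEN iffD1])
qed

section \<open>Rearranging the partition function\<close>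

definition run_lengths :: "(nat list \<times> nat list) set" where
  "run_lengths = {(ls, ms). (\<forall>l\<in>set ls. 0 < l) \<and> (\<forall>m\<in>set ms. 0 < m)}"

definition gap_lists :: "nat list \<times> nat list \<Rightarrow> (nat list \<times> nat list) set" where
  "gap_lists p = gaps_from 0 (fst p) \<times> gaps_from 0 (snd p)"

definition code_config :: "(nat list \<times> nat list) \<times> (nat list \<times> nat list) \<Rightarrow> int \<Rightarrow> int" where
  "code_config = (\<lambda>((ls, ms), (gs, hs)). config (runs 0 ls gs) (runs 1 ms hs))"

definition gap_weight :: "real \<Rightarrow> real \<Rightarrow> nat list \<times> nat list \<Rightarrow> nat list \<times> nat list \<Rightarrow> real" where
  "gap_weight Q c p w = Q powr (\<Sum>i\<in>runs 0 (fst p) (fst w). real i + c) * Q powr (\<Sum>i\<in>runs 1 (snd p) (snd w). real i - c)"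

lemma bij_betw_code_config: "bij_betw code_config (Sigma run_lengths gap_lists) spin_configs"
proof -
  let ?regroup = "\<lambda>((ls, ms), (gs, hs)). ((ls, gs), (ms, hs))"
  let ?runs = "map_prod (\<lambda>(ls, gs). runs 0 ls gs) (\<lambda>(ms, hs). runs 1 ms hs)"
  have regroup: "bij_betw ?regroup (Sigma run_lengths gap_lists) (run_codes \<times> run_codes)"
    by (rule bij_betw_byWitness[where f' = ?regroup])
      (auto simp: run_lengths_def gap_lists_def gaps_from_def run_codes_def)
  have "S \<subseteq> {1..} \<longleftrightarrow> 0 \<notin> S" for S :: "nat set"
    by (auto simp: subset_eq Suc_le_eq intro: gr0I)
  then have runs: "bij_betw ?runs (run_codes \<times> run_codes) ({B. finite B} \<times> {A. finite A \<and> 0 \<notin> A})"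
    using bij_betw_map_prod[OF bij_betw_runs bij_betw_runs, of 0 1] by simp
  have "(\<lambda>(B, A). config B A) \<circ> (?runs \<circ> ?regroup) = code_config"
    by (auto simp: code_config_def)
  then show ?thesis
    using bij_betw_trans[OF bij_betw_trans[OF regroup runs] bij_betw_config] by simp
qed

lemma hamiltonian_runs_config:
  assumes "(ls, gs) \<in> run_codes" "(ms, hs) \<in> run_codes"
  defines "B \<equiv> runs 0 ls gs" and "A \<equiv> runs 1 ms hs"
  shows "hamiltonian (config B A) = 2 * real (length ls + length ms) + (if 0 \<in> B \<or> 1 \<in> A then -1 else 1)"
proof -
  have "0 \<notin> A"
    using runs_subset[of 1 ms hs] by (auto simp: A_def)
  then have "card (boundary A) = 2 * length ms" and "0 \<in> boundary A \<longleftrightarrow> 1 \<in> A"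
    using card_boundary_runs[OF assms(2), of 1] by (simp_all add: A_def boundary_def)
  moreover have "card (boundary A - {0}) + of_bool (0 \<in> boundary A) = card (boundary A)"
    using finite_boundary[of A] card.remove[of "boundary A" 0] by (simp add: A_def)
  ultimately have "card (boundary A - {0}) + of_bool (1 \<in> A) = 2 * length ms"
    by simp
  from arg_cong[where f = real, OF this]
  have "real (card (boundary A - {0})) + of_bool (1 \<in> A) = 2 * real (length ms)"
    by simp
  moreover from arg_cong[where f = real, OF card_boundary_runs[OF assms(1), of 0]]
  have "real (card (boundary B)) + of_bool (0 \<in> B) = 2 * real (length ls)"
    by (simp add: B_def)
  ultimately show ?thesis
    using hamiltonian_config[of B A] by (cases "0 \<in> B"; cases "1 \<in> A") (simp_all add: A_def B_def)
qed

lemma Z_term_code_config: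
  assumes "0 < q" "Q = q ^ 2" "y = exp (- 2 * \<beta>)" "p \<in> run_lengths" "w \<in> gap_lists p"
  shows "Z_term \<beta> q c (code_config (p, w)) =
    y ^ (length (fst p) + length (snd p))
      * (if w \<in> gaps_from 1 (fst p) \<times> gaps_from 1 (snd p) then y powr (1/2) else y powr (-1/2))
      * gap_weight Q c p w"
proof -
  obtain ls ms gs hs where pw: "p = (ls, ms)" "w = (gs, hs)"
    by fastforce
  let ?n = "length ls + length ms"
  have codes: "(ls, gs) \<in> run_codes" "(ms, hs) \<in> run_codes"
    using assms(4,5) by (auto simp: pw run_lengths_def gap_lists_def gaps_from_def run_codes_def)
  have "0 \<notin> runs 1 ms hs"
    using runs_subset[of 1 ms hs] by auto
  then have "Z_term \<beta> q c (code_config (p, w)) =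
      exp (- \<beta> * hamiltonian (config (runs 0 ls gs) (runs 1 ms hs))) * gap_weight Q c p w"
    using assms(1,2) by (simp add: pw code_config_def gap_weight_def Z_term_config powr_sum)
  moreover have y: "y powr t = exp (- 2 * \<beta> * t)" for t
    by (simp add: assms(3) powr_def)
  then have "exp (- \<beta> * (2 * real ?n + e)) = y ^ ?n * y powr (e / 2)" for e
    using assms(3) by (simp add: y powr_realpow[symmetric] exp_add[symmetric] algebra_simps)
  moreover have "0 \<in> runs 0 ls gs \<or> 1 \<in> runs 1 ms hs \<longleftrightarrow> w \<notin> gaps_from 1 ls \<times> gaps_from 1 ms"
    using start_mem_runs_iff[OF codes(1), of 0] start_mem_runs_iff[OF codes(2), of 1] codes
    by (auto simp: pw gaps_from_def run_codes_def)
  ultimately show ?thesis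
    using hamiltonian_runs_config[OF codes] by (simp add: pw)
qed

lemma has_sum_gap_weight:
  assumes "0 < Q" "Q < 1" "p \<in> run_lengths"
  shows "(gap_weight Q c p has_sum block_prod Q c (real k - 1) (fst p) * block_prod Q (- c) (real k) (snd p))
           (gaps_from k (fst p) \<times> gaps_from k (snd p))"
proof -
  have "\<forall>l\<in>set (fst p). 0 < l" "\<forall>m\<in>set (snd p). 0 < m"
    using assms(3) by (auto simp: run_lengths_def)
  from has_sum_runs_weight[OF assms(1,2) this(1), where s = 0 and d = c and k = k]
    has_sum_runs_weight[OF assms(1,2) this(2), where s = 1 and d = "- c" and k = k]
  have "((\<lambda>(gs, hs). Q powr (\<Sum>i\<in>runs 0 (fst p) gs. real i + c) * Q powr (\<Sum>i\<in>runs 1 (snd p) hs. real i - c))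
      has_sum block_prod Q c (real k - 1) (fst p) * block_prod Q (- c) (real k) (snd p))
      (gaps_from k (fst p) \<times> gaps_from k (snd p))"
    by (intro has_sum_mult_nonneg) simp_all
  then show ?thesis
    by (simp add: gap_weight_def[abs_def] case_prod_unfold)
qed

lemma has_sum_series_term:
  assumes "0 < q" "q < 1" "Q = q ^ 2" "y = exp (- 2 * \<beta>)" "p \<in> run_lengths"
  shows "((\<lambda>w. Z_term \<beta> q c (code_config (p, w))) has_sum series_term y Q c p) (gap_lists p)"
proof -
  obtain ls ms where p: "p = (ls, ms)"
    by fastforce
  have Q: "0 < Q" "Q < 1"
    using assms(1-3) by (simp_all add: power_less_one_iff)
  define G1 where "G1 = gaps_from 1 ls \<times> gaps_from 1 ms"
  define K1 where "K1 = y ^ (length ls + length ms) * y powr (-1/2)"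
  define K2 where "K2 = y ^ (length ls + length ms) * (y powr (1/2) - y powr (-1/2))"
  have "(gap_weight Q c p has_sum block_prod Q c (-1) ls * block_prod Q (- c) 0 ms) (gap_lists p)"
    using has_sum_gap_weight[OF Q assms(5), of c 0] by (simp add: p gap_lists_def)
  moreover have "(gap_weight Q c p has_sum block_prod Q c 0 ls * block_prod Q (- c) 1 ms) G1"
    using has_sum_gap_weight[OF Q assms(5), of c 1] by (simp add: p G1_def)
  then have "((\<lambda>w. of_bool (w \<in> G1) * gap_weight Q c p w) has_sum
      block_prod Q c 0 ls * block_prod Q (- c) 1 ms) (gap_lists p)"
    by (rule has_sum_cong_neutral[THEN iffD1, rotated 3]) (auto simp: G1_def gaps_from_def gap_lists_def p)
  ultimately have sum: "((\<lambda>w. K1 * gap_weight Q c p w + K2 * (of_bool (w \<in> G1) * gap_weight Q c p w)) has_sum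
      K1 * (block_prod Q c (-1) ls * block_prod Q (- c) 0 ms) + K2 * (block_prod Q c 0 ls * block_prod Q (- c) 1 ms))
      (gap_lists p)"
    by (intro has_sum_add has_sum_cmult_right)
  have "block_prod Q c 0 ls = Q ^ sum_list ls * block_prod Q c (-1) ls"
    using block_prod_shift_prev[OF Q(1), where d = c and p = "-1" and t = 1 and xs = ls] Q(1)
    by (simp add: powr_realpow)
  moreover have "block_prod Q (- c) 1 ms = Q ^ sum_list ms * block_prod Q (- c) 0 ms"
    using block_prod_shift_prev[OF Q(1), where d = "- c" and p = 0 and t = 1 and xs = ms] Q(1)
    by (simp add: powr_realpow)
  ultimately have total: "K1 * (block_prod Q c (-1) ls * block_prod Q (- c) 0 ms)
      + K2 * (block_prod Q c 0 ls * block_prod Q (- c) 1 ms) = series_term y Q c p"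
    by (simp add: series_term_def p K1_def K2_def algebra_simps)
  have summands: "Z_term \<beta> q c (code_config (p, w))
      = K1 * gap_weight Q c p w + K2 * (of_bool (w \<in> G1) * gap_weight Q c p w)"
    if "w \<in> gap_lists p" for w
    using Z_term_code_config[OF assms(1,3,4,5) that] by (simp add: p G1_def K1_def K2_def algebra_simps)
  show ?thesis
    using has_sum_cong[THEN iffD2, OF summands sum] total by simp
qed

lemma run_lengths_eq_insert_index_set: "run_lengths = insert ([], []) index_set"
  by (auto simp: run_lengths_def index_set_def)

theorem corollary4p3:
  fixes c \<beta> q Q y :: real
  assumes "\<beta> \<ge> 0" and "0 < q" and "q < 1"
    and "Q = q ^ 2" and "y = exp (- 2 * \<beta>)"
  shows "series_term y Q c summable_on index_set \<and>
         (Z_term \<beta> q c has_sum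
            (y powr (1/2) + (\<Sum>\<^sub>\<infinity> p\<in>index_set. series_term y Q c p))) spin_configs"
proof -
  define Z where "Z = (\<Sum>\<^sub>\<infinity>z\<in>Sigma run_lengths gap_lists. Z_term \<beta> q c (code_config z))"
  have "(\<lambda>z. Z_term \<beta> q c (code_config z)) summable_on Sigma run_lengths gap_lists"
    using summable_Z_term[OF assms(1-3)] summable_on_reindex_bij_betw[OF bij_betw_code_config] by blast
  then have Z: "((\<lambda>z. Z_term \<beta> q c (code_config z)) has_sum Z) (Sigma run_lengths gap_lists)"
    unfolding Z_def by (rule has_sum_infsum)
  then have Z_term: "(Z_term \<beta> q c has_sum Z) spin_configs"
    using has_sum_reindex_bij_betw[OF bij_betw_code_config] by blast
  have "(series_term y Q c has_sum Z) (insert ([], []) index_set)"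
    using has_sum_SigmaD[OF Z has_sum_series_term[OF assms(2-5)]] by (simp add: run_lengths_eq_insert_index_set)
  moreover have "(series_term y Q c has_sum y powr (1/2)) {([], [])}"
    by (simp add: has_sum_finiteI series_term_def)
  ultimately have "(series_term y Q c has_sum Z - y powr (1/2)) (insert ([], []) index_set - {([], [])})"
    by (rule has_sum_Diff) simp
  moreover have "([], []) \<notin> index_set"
    by (simp add: index_set_def)
  ultimately have "(series_term y Q c has_sum Z - y powr (1/2)) index_set"
    by simp
  with Z_term show ?thesis
    by (auto simp: has_sum_imp_summable infsumI)
qed

end
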